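(* Let $\Lambda$ be diagonal with entries in $[0,1]$, let $W,\tilde W\in\mathbb{R}^{n\times n}$ be row-stochastic, let $\beta\in\mathbb{R}^n$ with $\beta_i\in(0,1)$ for all $i$, and set $W^{(1)}=(I-[\beta])W$, $W^{(2)}=[\beta]\tilde W$. If $\rho(\Lambda W)<1$ or $\rho(\Lambda\tilde W)<1$, then the FJ-MM system $x(t+1)=\Lambda(W^{(1)}x(t)+W^{(2)}x(t-1))+(I-\Lambda)s$ is exponentially stable, equivalently $\rho(\Lambda(W^{(1)}+W^{(2)}))<1$.
   Context: $[\beta]$ denotes the diagonal matrix with diagonal entries $\beta_1,\dots,\beta_n$. $\rho$ denotes spectral radius. Exponential stability of the FJ-MM system means $\rho(\bar A_d)<1$ for $\bar A_d=\begin{pmatrix}0 & I\\ \Lambda W^{(2)} & \Lambda W^{(1)}\end{pmatrix}$. *)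

theory Defs
  imports "Jordan_Normal_Form.Spectral_Radius"
begin

definition rho :: "real mat \<Rightarrow> real" where
  "rho A = spectral_radius (map_mat complex_of_real A)"

definition row_stochastic :: "nat \<Rightarrow> real mat \<Rightarrow> bool" where
  "row_stochastic n W \<longleftrightarrow> W \<in> carrier_mat n n \<and>
     (\<forall>i<n. \<forall>j<n. 0 \<le> W $$ (i, j)) \<and>
     (\<forall>i<n. (\<Sum>j<n. W $$ (i, j)) = 1)"

definition fjmm_matrix :: "nat \<Rightarrow> real mat \<Rightarrow> real mat \<Rightarrow> real mat \<Rightarrow> real mat" where
  "fjmm_matrix n Lam W1 W2 =
     four_block_mat (0\<^sub>m n n) (1\<^sub>m n) (Lam * W2) (Lam * W1)"

end

theory Submission
  imports Defs
begin

text \<open>For a nonnegative matrix \<open>M\<close>, \<open>\<rho>(M) < 1\<close> holds iff some power \<open>M\<^sup>k\<close> has all row sums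
  below 1: if \<open>\<rho>(M) < 1\<close>, the Jordan-form bound on the powers of \<open>t M\<close> for some \<open>t > 1\<close> makes
  \<open>M\<^sup>k\<close> decay geometrically; conversely, an eigenvector \<open>v\<close> for an eigenvalue of modulus at least 1
  gives \<open>|v| \<le> M |v|\<close>, and iterating this against the contraction \<open>M\<^sup>k\<close> forces \<open>v = 0\<close>.

  The matrix \<open>M = \<Lambda>((I - [\<beta>]) W + [\<beta>] W\<^sub>t)\<close> has the same row sums \<open>\<lambda>\<^sub>i \<le> 1\<close> as \<open>\<Lambda> W\<close> and
  \<open>\<Lambda> W\<^sub>t\<close>, and dominates \<open>c \<Lambda> W\<close> for \<open>c = min\<^sub>i (1 - \<beta>\<^sub>i)\<close> and \<open>c \<Lambda> W\<^sub>t\<close> for \<open>c = min\<^sub>i \<beta>\<^sub>i\<close>.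
  Comparing the mass lost by the substochastic chains \<open>M\<close> and \<open>\<Lambda> W\<close> (or \<open>\<Lambda> W\<^sub>t\<close>) in \<open>k\<close>
  steps transfers the power criterion, so \<open>\<rho>(M) < 1\<close>. Finally, an eigenvector \<open>(a, \<mu> a)\<close> of the
  companion matrix with \<open>|\<mu>| \<ge> 1\<close> satisfies \<open>\<mu>\<^sup>2 a = \<Lambda> W\<^sup>(\<^sup>2\<^sup>) a + \<mu> \<Lambda> W\<^sup>(\<^sup>1\<^sup>) a\<close>,
  hence \<open>|a| \<le> M |a|\<close>, and again \<open>a = 0\<close>.\<close>

definition nonneg_mat :: "real mat \<Rightarrow> bool" where
  "nonneg_mat A \<longleftrightarrow> (\<forall>i<dim_row A. \<forall>j<dim_col A. 0 \<le> A $$ (i, j))"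

lemma mult_mat_vec_nth:
  assumes "A \<in> carrier_mat nr n" "v \<in> carrier_vec n" "i < nr"
  shows "(A *\<^sub>v v) $ i = (\<Sum>j<n. A $$ (i, j) * v $ j)"
  using assms by (auto simp: scalar_prod_def atLeast0LessThan intro!: sum.cong)

lemma nonneg_mult_mat_vec_mono:
  assumes "A \<in> carrier_mat nr n" "nonneg_mat A" "x \<in> carrier_vec n" "y \<in> carrier_vec n"
    and "\<forall>j<n. x $ j \<le> y $ j" and "i < nr"
  shows "(A *\<^sub>v x) $ i \<le> (A *\<^sub>v y) $ i"
  unfolding mult_mat_vec_nth[OF assms(1,3,6)] mult_mat_vec_nth[OF assms(1,4,6)]
  using assms by (auto simp: nonneg_mat_def intro!: sum_mono mult_left_mono)

lemma nonneg_mult_mat_vec_nonneg: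
  assumes "A \<in> carrier_mat nr n" "nonneg_mat A" "x \<in> carrier_vec n" "\<forall>j<n. 0 \<le> x $ j"
    and "i < nr"
  shows "0 \<le> (A *\<^sub>v x) $ i"
  unfolding mult_mat_vec_nth[OF assms(1,3,5)]
  using assms by (auto simp: nonneg_mat_def intro!: sum_nonneg)

lemma norm_of_real_mult_mat_vec_le:
  assumes M: "M \<in> carrier_mat nr n" "nonneg_mat M" and v: "v \<in> carrier_vec n" and i: "i < nr"
  shows "norm ((map_mat complex_of_real M *\<^sub>v v) $ i) \<le> (M *\<^sub>v map_vec norm v) $ i"
proof -
  have "norm ((map_mat complex_of_real M *\<^sub>v v) $ i)
      = norm (\<Sum>j<n. complex_of_real (M $$ (i, j)) * v $ j)"
    using M v i by (subst mult_mat_vec_nth[of _ nr n]) auto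
  also have "\<dots> \<le> (\<Sum>j<n. norm (complex_of_real (M $$ (i, j)) * v $ j))"
    by (rule norm_sum)
  also have "\<dots> = (M *\<^sub>v map_vec norm v) $ i"
    using M v i by (subst mult_mat_vec_nth[of _ nr n]) (auto simp: nonneg_mat_def norm_mult)
  finally show ?thesis .
qed

lemma nonneg_mat_if_dominates_scaled:
  assumes X: "X \<in> carrier_mat n n" "nonneg_mat X" and M: "M \<in> carrier_mat n n"
    and c: "0 \<le> c" and dom: "\<forall>i<n. \<forall>j<n. c * X $$ (i, j) \<le> M $$ (i, j)"
  shows "nonneg_mat M"
  unfolding nonneg_mat_def
proof (intro allI impI)
  fix i j assume "i < dim_row M" "j < dim_col M"
  then have ij: "i < n" "j < n" using M by auto
  have "0 \<le> c * X $$ (i, j)" using X c ij by (simp add: nonneg_mat_def)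
  also have "\<dots> \<le> M $$ (i, j)" using dom ij by blast
  finally show "0 \<le> M $$ (i, j)" .
qed

definition row_sums :: "real mat \<Rightarrow> real vec" where
  "row_sums A = A *\<^sub>v vec (dim_col A) (\<lambda>_. 1)"

lemma dim_row_sums [simp]: "dim_vec (row_sums A) = dim_row A"
  by (simp add: row_sums_def)

lemma row_sums_pow_carrier [simp]:
  "A \<in> carrier_mat n n \<Longrightarrow> row_sums (A ^\<^sub>m k) \<in> carrier_vec n"
  by (intro carrier_vecI) simp

lemma row_sums_nth:
  assumes "A \<in> carrier_mat nr n" "i < nr"
  shows "row_sums A $ i = (\<Sum>j<n. A $$ (i, j))"
  unfolding row_sums_def using assms by (subst mult_mat_vec_nth[of _ nr n]) auto

lemma row_sums_pow_Suc:
  assumes A: "A \<in> carrier_mat n n"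
  shows "row_sums (A ^\<^sub>m Suc k) = A *\<^sub>v row_sums (A ^\<^sub>m k)"
proof -
  have "A ^\<^sub>m k * A = A * A ^\<^sub>m k"
  proof (induction k)
    case (Suc k)
    have "A ^\<^sub>m Suc k * A = (A * A ^\<^sub>m k) * A" by (simp add: Suc.IH)
    also have "\<dots> = A * A ^\<^sub>m Suc k" using A by (simp add: assoc_mult_mat[of _ n n _ n _ n])
    finally show ?case .
  qed (use A in simp)
  then show ?thesis using A by (simp add: row_sums_def assoc_mult_mat_vec[of _ n n _ n])
qed

lemma one_minus_row_sums_pow_Suc:
  assumes A: "A \<in> carrier_mat n n" and i: "i < n"
  shows "1 - row_sums (A ^\<^sub>m Suc k) $ i
    = (1 - row_sums A $ i) + (\<Sum>j<n. A $$ (i, j) * (1 - row_sums (A ^\<^sub>m k) $ j))"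
proof -
  have "row_sums (A ^\<^sub>m Suc k) $ i = (\<Sum>j<n. A $$ (i, j) * row_sums (A ^\<^sub>m k) $ j)"
    unfolding row_sums_pow_Suc[OF A] using A i by (intro mult_mat_vec_nth) auto
  then show ?thesis
    using A i by (simp add: row_sums_nth[OF A i] sum_subtractf algebra_simps)
qed

lemma pow_row_sums_le_one:
  assumes X: "X \<in> carrier_mat n n" "nonneg_mat X" and rows: "\<forall>i<n. row_sums X $ i \<le> 1"
    and i: "i < n"
  shows "row_sums (X ^\<^sub>m k) $ i \<le> 1"
  using i
proof (induction k arbitrary: i)
  case (Suc k)
  have "row_sums (X ^\<^sub>m Suc k) $ i = (X *\<^sub>v row_sums (X ^\<^sub>m k)) $ i"
    unfolding row_sums_pow_Suc[OF X(1)] ..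
  also have "\<dots> \<le> (X *\<^sub>v vec n (\<lambda>_. 1)) $ i"
    using Suc X by (intro nonneg_mult_mat_vec_mono[of _ n n]) auto
  also have "\<dots> \<le> 1" using rows Suc.prems X by (simp add: row_sums_def)
  finally show ?case .
qed (use X in \<open>simp add: row_sums_def\<close>)

lemma one_minus_mat_diag:
  fixes f :: "nat \<Rightarrow> 'a :: ring_1"
  shows "1\<^sub>m n - mat_diag n f = mat_diag n (\<lambda>i. 1 - f i)"
  by (intro eq_matI) (auto simp: mat_diag_def)

lemma mat_diag_mult_index:
  assumes "A \<in> carrier_mat n m" "i < n" "j < m"
  shows "(mat_diag n f * A) $$ (i, j) = f i * A $$ (i, j)"
  using mat_diag_mult_left[OF assms(1)] assms by simp

lemma mat_diag_mult_carrier [simp]: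
  "A \<in> carrier_mat n m \<Longrightarrow> mat_diag n f * A \<in> carrier_mat n m"
  by (rule mult_carrier_mat[OF mat_diag_dim])

lemma nonneg_mat_diag_mult:
  assumes "A \<in> carrier_mat n m" "nonneg_mat A" "\<forall>i<n. 0 \<le> f i"
  shows "nonneg_mat (mat_diag n f * A)"
  unfolding mat_diag_mult_left[OF assms(1)] using assms by (auto simp: nonneg_mat_def)

lemma row_sums_mat_diag_mult:
  assumes "A \<in> carrier_mat n m"
  shows "row_sums (mat_diag n f * A) = vec n (\<lambda>i. f i * row_sums A $ i)"
  unfolding mat_diag_mult_left[OF assms]
  using assms by (intro eq_vecI) (auto simp: row_sums_nth[OF mat_carrier] row_sums_nth[OF assms]
    sum_distrib_left)

lemma row_stochasticD:
  assumes "row_stochastic n W"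
  shows "W \<in> carrier_mat n n" "nonneg_mat W" "row_sums W = vec n (\<lambda>_. 1)"
  using assms by (auto simp: row_stochastic_def nonneg_mat_def row_sums_nth)

lemma smult_pow_mat:
  fixes A :: "'a :: comm_ring_1 mat"
  assumes A: "A \<in> carrier_mat n n"
  shows "(a \<cdot>\<^sub>m A) ^\<^sub>m k = a ^ k \<cdot>\<^sub>m A ^\<^sub>m k"
proof (induction k)
  case (Suc k)
  then show ?case using A
    by (simp add: mult_smult_assoc_mat[of _ n n _ n] mult_smult_distrib[of _ n n _ n])
      (rule eq_matI; simp)
qed (use A in auto)

lemma smult_mult_mat_vec:
  fixes A :: "'a :: comm_semiring_0 mat"
  assumes "A \<in> carrier_mat nr n" "v \<in> carrier_vec n"
  shows "(a \<cdot>\<^sub>m A) *\<^sub>v v = a \<cdot>\<^sub>v (A *\<^sub>v v)"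
  using assms by (intro eq_vecI) auto

lemma spectral_radius_eigenvector:
  assumes "A \<in> carrier_mat n n" "0 < n"
  obtains v \<mu> where "eigenvector A v \<mu>" "norm \<mu> = spectral_radius A"
  using spectral_radius_mem_max(1)[OF assms] unfolding spectrum_def eigenvalue_def by auto

lemma spectral_radius_smult_le:
  assumes A: "A \<in> carrier_mat n n" and n: "0 < n" and t: "0 < t"
  shows "spectral_radius (complex_of_real t \<cdot>\<^sub>m A) \<le> t * spectral_radius A"
proof -
  obtain v \<mu> where ev: "eigenvector (complex_of_real t \<cdot>\<^sub>m A) v \<mu>"
    and \<mu>: "norm \<mu> = spectral_radius (complex_of_real t \<cdot>\<^sub>m A)"
    using spectral_radius_eigenvector[of "complex_of_real t \<cdot>\<^sub>m A" n] A n by auto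
  have "eigenvector A v (\<mu> / complex_of_real t)"
    using ev A t unfolding eigenvector_def
    by (auto simp: smult_mult_mat_vec[of _ n n] smult_smult_assoc vec_eq_iff field_simps)
  then have "norm (\<mu> / complex_of_real t) \<le> spectral_radius A"
    by (intro spectral_radius_mem_max(2)[OF A n] imageI) (auto simp: spectrum_def eigenvalue_def)
  then show ?thesis using \<mu> t by (simp add: norm_divide field_simps)
qed

lemma rho_less_one_imp_pow_row_sums_less_one:
  assumes X: "X \<in> carrier_mat n n" and r: "rho X < 1"
  shows "\<exists>k. \<forall>i<n. row_sums (X ^\<^sub>m k) $ i < 1"
proof (cases "n = 0")
  case False
  define Xc where "Xc = map_mat complex_of_real X"
  have Xc: "Xc \<in> carrier_mat n n" using X by (simp add: Xc_def)
  have r0: "0 \<le> rho X"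
    using spectral_radius_mem_max(1)[OF Xc] False by (auto simp: rho_def Xc_def)
  define t where "t = 2 / (1 + rho X)"
  have t: "1 < t" "t * rho X < 1" using r r0 by (simp_all add: t_def field_simps)
  have "spectral_radius (complex_of_real t \<cdot>\<^sub>m Xc) \<le> t * rho X"
    using spectral_radius_smult_le[OF Xc] False t by (simp add: rho_def Xc_def)
  then have "spectral_radius (complex_of_real t \<cdot>\<^sub>m Xc) < 1" using t by simp
  then obtain c where c: "norm_bound ((complex_of_real t \<cdot>\<^sub>m Xc) ^\<^sub>m k) c" for k
    using spectral_radius_jnf_norm_bound_less_1_upper_triangular[of _ n] Xc by fastforce
  have entry: "t ^ k * \<bar>(X ^\<^sub>m k) $$ (i, j)\<bar> \<le> c" if "i < n" "j < n" for i j k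
  proof -
    have "(complex_of_real t \<cdot>\<^sub>m Xc) ^\<^sub>m k
        = complex_of_real (t ^ k) \<cdot>\<^sub>m map_mat complex_of_real (X ^\<^sub>m k)"
      by (subst smult_pow_mat[OF Xc]) (simp add: Xc_def of_real_hom.mat_hom_pow[OF X])
    then show ?thesis
      using c[of k] that X t by (auto simp: norm_bound_def norm_mult norm_power)
  qed
  obtain k where k: "real n * c < t ^ k" using real_arch_pow[OF t(1)] by blast
  have "row_sums (X ^\<^sub>m k) $ i < 1" if i: "i < n" for i
  proof -
    have "t ^ k * row_sums (X ^\<^sub>m k) $ i = (\<Sum>j<n. t ^ k * (X ^\<^sub>m k) $$ (i, j))"
      using X i by (simp add: row_sums_nth[of _ n n] sum_distrib_left)
    also have "\<dots> \<le> (\<Sum>j<n. c)"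
      using entry[OF i] t
      by (intro sum_mono) (auto intro: order.trans[OF mult_left_mono[OF abs_ge_self]])
    also have "\<dots> < t ^ k" using k by simp
    finally show ?thesis using t by simp
  qed
  then show ?thesis by blast
qed simp

lemma nonneg_subinvariant_vec_eq_0:
  assumes M: "M \<in> carrier_mat n n" "nonneg_mat M"
    and k: "\<forall>i<n. row_sums (M ^\<^sub>m k) $ i < 1"
    and x: "x \<in> carrier_vec n" "\<forall>i<n. 0 \<le> x $ i" "\<forall>i<n. x $ i \<le> (M *\<^sub>v x) $ i"
  shows "x = 0\<^sub>v n"
proof (cases "n = 0")
  case False
  define m where "m = Max ((\<lambda>i. x $ i) ` {..<n})"
  have x_le_m: "x $ i \<le> m" if "i < n" for i
    using that by (simp add: m_def)
  have "m \<in> (\<lambda>i. x $ i) ` {..<n}"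
    unfolding m_def using False by (intro Max_in) auto
  then obtain i0 where i0: "i0 < n" "x $ i0 = m" by auto
  have bound: "\<forall>i<n. x $ i \<le> m * row_sums (M ^\<^sub>m q) $ i" for q
  proof (induction q)
    case 0
    then show ?case using x_le_m M by (simp add: row_sums_def)
  next
    case (Suc q)
    show ?case
    proof (intro allI impI)
      fix i assume i: "i < n"
      have "x $ i \<le> (M *\<^sub>v x) $ i" using x i by blast
      also have "\<dots> \<le> (M *\<^sub>v (m \<cdot>\<^sub>v row_sums (M ^\<^sub>m q))) $ i"
        using Suc.IH M x i by (intro nonneg_mult_mat_vec_mono[of _ n n]) auto
      also have "\<dots> = m * row_sums (M ^\<^sub>m Suc q) $ i"
        unfolding mult_mat_vec[OF M(1) row_sums_pow_carrier[OF M(1)]] row_sums_pow_Suc[OF M(1)]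
        using M i by simp
      finally show "x $ i \<le> m * row_sums (M ^\<^sub>m Suc q) $ i" .
    qed
  qed
  have "m \<le> 0"
  proof (rule ccontr)
    assume "\<not> m \<le> 0"
    then have "m * row_sums (M ^\<^sub>m k) $ i0 < m"
      using k i0 mult_strict_left_mono[of "row_sums (M ^\<^sub>m k) $ i0" 1 m] by simp
    then show False using bound[of k] i0 by auto
  qed
  then have "x $ i = 0" if "i < n" for i
    using x_le_m[OF that] x(2) that by fastforce
  then show ?thesis using x by (intro eq_vecI) auto
qed (use x in auto)

lemma pow_row_sums_less_one_imp_rho_less_one:
  assumes M: "M \<in> carrier_mat n n" "nonneg_mat M" and n: "0 < n"
    and k: "\<forall>i<n. row_sums (M ^\<^sub>m k) $ i < 1"
  shows "rho M < 1"
proof (rule ccontr)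
  assume "\<not> rho M < 1"
  define Mc where "Mc = map_mat complex_of_real M"
  have Mc: "Mc \<in> carrier_mat n n" using M by (simp add: Mc_def)
  obtain v \<mu> where ev: "eigenvector Mc v \<mu>" and "norm \<mu> = rho M"
    using spectral_radius_eigenvector[OF Mc n] by (auto simp: rho_def Mc_def)
  with \<open>\<not> rho M < 1\<close> have \<mu>: "1 \<le> norm \<mu>" by simp
  from ev Mc have v: "v \<in> carrier_vec n" "v \<noteq> 0\<^sub>v n" "Mc *\<^sub>v v = \<mu> \<cdot>\<^sub>v v"
    by (auto simp: eigenvector_def)
  have "map_vec norm v = 0\<^sub>v n"
  proof (rule nonneg_subinvariant_vec_eq_0[OF M k])
    show "\<forall>i<n. map_vec norm v $ i \<le> (M *\<^sub>v map_vec norm v) $ i"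
    proof (intro allI impI)
      fix i assume i: "i < n"
      have "norm (v $ i) \<le> norm \<mu> * norm (v $ i)" using \<mu> by (simp add: mult_le_cancel_right1)
      also have "\<dots> = norm ((Mc *\<^sub>v v) $ i)" using v i by (simp add: norm_mult)
      also have "\<dots> \<le> (M *\<^sub>v map_vec norm v) $ i"
        unfolding Mc_def by (rule norm_of_real_mult_mat_vec_le[OF M v(1) i])
      finally show "map_vec norm v $ i \<le> (M *\<^sub>v map_vec norm v) $ i" using v i by simp
    qed
  qed (use v in auto)
  then have "v = 0\<^sub>v n" using v by (auto simp: vec_eq_iff)
  with v show False by blast
qed

text \<open>Read \<open>1 - row_sums (M ^\<^sub>m k)\<close> as the mass lost in \<open>k\<close> steps of the substochastic chain
  \<open>M\<close>: with weight at least \<open>c ^ k\<close> all \<open>k\<close> steps follow the copy \<open>c X\<close> of \<open>X\<close> inside \<open>M\<close>,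
  and along these the mass \<open>1 - row_sums (X ^\<^sub>m k)\<close> is lost.\<close>

lemma pow_row_sums_deficit_scaled_le:
  assumes X: "X \<in> carrier_mat n n" "nonneg_mat X" and M: "M \<in> carrier_mat n n"
    and rows_X: "\<forall>i<n. row_sums X $ i \<le> 1" and rows_eq: "row_sums M = row_sums X"
    and c: "0 < c" "c \<le> 1" and dom: "\<forall>i<n. \<forall>j<n. c * X $$ (i, j) \<le> M $$ (i, j)"
    and i: "i < n"
  shows "c ^ k * (1 - row_sums (X ^\<^sub>m k) $ i) \<le> 1 - row_sums (M ^\<^sub>m k) $ i"
  using i
proof (induction k arbitrary: i)
  case 0
  then show ?case using X M by (simp add: row_sums_def)
next
  case (Suc k)
  let ?e = "row_sums (X ^\<^sub>m k)" and ?u = "row_sums (M ^\<^sub>m k)"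
  have M_nonneg: "nonneg_mat M"
    using nonneg_mat_if_dominates_scaled[OF X M less_imp_le[OF c(1)] dom] .
  have "c ^ Suc k * (1 - row_sums (X ^\<^sub>m Suc k) $ i)
      = c ^ Suc k * (1 - row_sums X $ i) + (\<Sum>j<n. c * X $$ (i, j) * (c ^ k * (1 - ?e $ j)))"
    unfolding one_minus_row_sums_pow_Suc[OF X(1) Suc.prems]
    by (simp add: distrib_left sum_distrib_left ac_simps)
  also have "\<dots> \<le> (1 - row_sums M $ i) + (\<Sum>j<n. M $$ (i, j) * (1 - ?u $ j))"
  proof (rule add_mono)
    have "0 \<le> 1 - row_sums X $ i" "0 \<le> c ^ Suc k" "c ^ Suc k \<le> 1"
      using rows_X Suc.prems c power_le_one[of c "Suc k"] by simp_all
    then show "c ^ Suc k * (1 - row_sums X $ i) \<le> 1 - row_sums M $ i"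
      unfolding rows_eq by (rule mult_left_le_one_le)
    show "(\<Sum>j<n. c * X $$ (i, j) * (c ^ k * (1 - ?e $ j))) \<le> (\<Sum>j<n. M $$ (i, j) * (1 - ?u $ j))"
    proof (rule sum_mono)
      fix j assume "j \<in> {..<n}"
      then have j: "j < n" by simp
      have "0 \<le> c ^ k * (1 - ?e $ j)"
        using pow_row_sums_le_one[OF X rows_X j] c by simp
      then have "c * X $$ (i, j) * (c ^ k * (1 - ?e $ j)) \<le> M $$ (i, j) * (c ^ k * (1 - ?e $ j))"
        using dom Suc.prems j by (simp add: mult_right_mono)
      also have "\<dots> \<le> M $$ (i, j) * (1 - ?u $ j)"
        using Suc.IH[OF j] M_nonneg M Suc.prems j
        by (intro mult_left_mono) (auto simp: nonneg_mat_def)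
      finally show "c * X $$ (i, j) * (c ^ k * (1 - ?e $ j)) \<le> M $$ (i, j) * (1 - ?u $ j)" .
    qed
  qed
  also have "\<dots> = 1 - row_sums (M ^\<^sub>m Suc k) $ i"
    unfolding one_minus_row_sums_pow_Suc[OF M Suc.prems] ..
  finally show ?case .
qed

lemma rho_less_one_if_dominates_scaled:
  assumes X: "X \<in> carrier_mat n n" "nonneg_mat X" and M: "M \<in> carrier_mat n n"
    and rows_X: "\<forall>i<n. row_sums X $ i \<le> 1" and rows_eq: "row_sums M = row_sums X"
    and c: "0 < c" "c \<le> 1" and dom: "\<forall>i<n. \<forall>j<n. c * X $$ (i, j) \<le> M $$ (i, j)"
    and rho_X: "rho X < 1"
  shows "rho M < 1"
proof (cases "n = 0")
  case True
  \<comment> \<open>\<open>rho\<close> of a \<open>0 \<times> 0\<close> matrix is \<open>Max {}\<close>, so it can only be transferred by equality.\<close>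
  then have "M = X" using X M by (intro eq_matI) auto
  then show ?thesis using rho_X by simp
next
  case False
  obtain k where k: "\<forall>i<n. row_sums (X ^\<^sub>m k) $ i < 1"
    using rho_less_one_imp_pow_row_sums_less_one[OF X(1) rho_X] by blast
  have "nonneg_mat M" by (rule nonneg_mat_if_dominates_scaled[OF X M less_imp_le[OF c(1)] dom])
  moreover have "\<forall>i<n. row_sums (M ^\<^sub>m k) $ i < 1"
  proof (intro allI impI)
    fix i assume i: "i < n"
    have "0 < c ^ k * (1 - row_sums (X ^\<^sub>m k) $ i)" using c k i by simp
    also have "\<dots> \<le> 1 - row_sums (M ^\<^sub>m k) $ i"
      by (rule pow_row_sums_deficit_scaled_le[OF X M rows_X rows_eq c dom i])
    finally show "row_sums (M ^\<^sub>m k) $ i < 1" by simp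
  qed
  ultimately show ?thesis
    using pow_row_sums_less_one_imp_rho_less_one M False by blast
qed

lemma rho_row_convex_combination_less_one:
  assumes S: "S \<in> carrier_mat n n" "nonneg_mat S" and T: "T \<in> carrier_mat n n" "nonneg_mat T"
    and rows_S: "\<forall>i<n. row_sums S $ i \<le> 1" and rows_eq: "row_sums T = row_sums S"
    and a: "\<forall>i<n. 0 \<le> a i \<and> a i < 1"
    and M: "M \<in> carrier_mat n n"
    and M_entries: "\<forall>i<n. \<forall>j<n. M $$ (i, j) = (1 - a i) * S $$ (i, j) + a i * T $$ (i, j)"
    and rho_S: "rho S < 1"
  shows "rho M < 1"
proof -
  \<comment> \<open>The element 1 keeps the set nonempty for \<open>n = 0\<close>.\<close>
  define gaps where "gaps = insert 1 ((\<lambda>i. 1 - a i) ` {..<n})"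
  define c where "c = Min gaps"
  have gaps: "finite gaps" "1 \<in> gaps" "\<And>i. i < n \<Longrightarrow> 1 - a i \<in> gaps"
    by (auto simp: gaps_def)
  have c_le: "c \<le> 1 - a i" if "i < n" for i
    unfolding c_def using gaps that by (intro Min_le)
  have "c \<le> 1"
    unfolding c_def using gaps by (intro Min_le)
  moreover have "c \<in> gaps"
    unfolding c_def using gaps by (intro Min_in) auto
  then have "0 < c" using a by (auto simp: gaps_def)
  ultimately have c: "0 < c" "c \<le> 1" by simp_all
  show ?thesis
  proof (rule rho_less_one_if_dominates_scaled[OF S M rows_S _ c _ rho_S])
    show "row_sums M = row_sums S"
    proof (rule eq_vecI)
      fix i assume "i < dim_vec (row_sums S)"
      then have i: "i < n" using S by simp
      have "row_sums M $ i = (\<Sum>j<n. (1 - a i) * S $$ (i, j) + a i * T $$ (i, j))"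
        unfolding row_sums_nth[OF M i] using M_entries i by (intro sum.cong) auto
      also have "\<dots> = (1 - a i) * row_sums S $ i + a i * row_sums T $ i"
        unfolding row_sums_nth[OF S(1) i] row_sums_nth[OF T(1) i]
        by (simp add: sum.distrib sum_distrib_left)
      finally show "row_sums M $ i = row_sums S $ i" using rows_eq by (simp add: algebra_simps)
    qed (use S M in simp)
    show "\<forall>i<n. \<forall>j<n. c * S $$ (i, j) \<le> M $$ (i, j)"
    proof (intro allI impI)
      fix i j assume ij: "i < n" "j < n"
      have "c * S $$ (i, j) \<le> (1 - a i) * S $$ (i, j)"
        using c_le[OF ij(1)] S ij by (intro mult_right_mono) (auto simp: nonneg_mat_def)
      also have "\<dots> \<le> M $$ (i, j)"
        using M_entries T a ij by (auto simp: nonneg_mat_def)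
      finally show "c * S $$ (i, j) \<le> M $$ (i, j)" .
    qed
  qed
qed

lemma companion_eigenvector_first_block:
  fixes P Q :: "complex mat"
  assumes P: "P \<in> carrier_mat n n" and Q: "Q \<in> carrier_mat n n"
    and ev: "eigenvector (four_block_mat (0\<^sub>m n n) (1\<^sub>m n) P Q) v \<mu>"
  shows "vec_first v n \<noteq> 0\<^sub>v n"
    and "P *\<^sub>v vec_first v n + \<mu> \<cdot>\<^sub>v (Q *\<^sub>v vec_first v n) = (\<mu> * \<mu>) \<cdot>\<^sub>v vec_first v n"
proof -
  let ?a = "vec_first v n" and ?b = "vec_last v n"
  have v: "v \<in> carrier_vec (n + n)" "v \<noteq> 0\<^sub>v (n + n)"
    "four_block_mat (0\<^sub>m n n) (1\<^sub>m n) P Q *\<^sub>v v = \<mu> \<cdot>\<^sub>v v"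
    using ev P Q by (auto simp: eigenvector_def)
  have a: "?a \<in> carrier_vec n" and b: "?b \<in> carrier_vec n" by simp_all
  have v_ab: "v = ?a @\<^sub>v ?b" using v(1) by simp
  have "0\<^sub>m n n *\<^sub>v ?a = 0\<^sub>v n" using a by (intro eq_vecI) auto
  then have "?b @\<^sub>v (P *\<^sub>v ?a + Q *\<^sub>v ?b) = four_block_mat (0\<^sub>m n n) (1\<^sub>m n) P Q *\<^sub>v v"
    by (subst v_ab, subst four_block_mat_mult_vec[OF zero_carrier_mat one_carrier_mat P Q a b])
      (use b in simp)
  also have "\<dots> = \<mu> \<cdot>\<^sub>v v" by (rule v(3))
  also have "\<dots> = (\<mu> \<cdot>\<^sub>v ?a) @\<^sub>v (\<mu> \<cdot>\<^sub>v ?b)"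
    by (subst v_ab) (use a b in \<open>intro eq_vecI; simp\<close>)
  finally have b_eq: "?b = \<mu> \<cdot>\<^sub>v ?a" and PQ_eq: "P *\<^sub>v ?a + Q *\<^sub>v ?b = \<mu> \<cdot>\<^sub>v ?b"
    using append_vec_eq[OF b smult_carrier_vec[THEN iffD2, OF a]] by blast+
  have "Q *\<^sub>v ?b = \<mu> \<cdot>\<^sub>v (Q *\<^sub>v ?a)" unfolding b_eq by (rule mult_mat_vec[OF Q a])
  with PQ_eq show "P *\<^sub>v ?a + \<mu> \<cdot>\<^sub>v (Q *\<^sub>v ?a) = (\<mu> * \<mu>) \<cdot>\<^sub>v ?a"
    by (simp add: b_eq smult_smult_assoc)
  show "?a \<noteq> 0\<^sub>v n"
  proof
    assume "?a = 0\<^sub>v n"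
    then have "v = 0\<^sub>v (n + n)" using v_ab b_eq a by (auto simp: vec_eq_iff)
    with v(2) show False ..
  qed
qed

lemma quadratic_eigenproblem_abs_subinvariant:
  assumes P: "P \<in> carrier_mat n n" "nonneg_mat P" and Q: "Q \<in> carrier_mat n n" "nonneg_mat Q"
    and a: "a \<in> carrier_vec n" and \<mu>: "1 \<le> norm \<mu>"
    and eq: "map_mat complex_of_real P *\<^sub>v a + \<mu> \<cdot>\<^sub>v (map_mat complex_of_real Q *\<^sub>v a)
      = (\<mu> * \<mu>) \<cdot>\<^sub>v a"
    and i: "i < n"
  shows "norm (a $ i) \<le> ((P + Q) *\<^sub>v map_vec norm a) $ i"
proof -
  let ?Pa = "map_mat complex_of_real P *\<^sub>v a" and ?Qa = "map_mat complex_of_real Q *\<^sub>v a"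
  let ?p = "(P *\<^sub>v map_vec norm a) $ i" and ?q = "(Q *\<^sub>v map_vec norm a) $ i"
  have "?Pa $ i + \<mu> * ?Qa $ i = \<mu> * \<mu> * a $ i"
    using arg_cong[OF eq, of "\<lambda>w. w $ i"] P Q a i by simp
  then have "norm \<mu> * norm \<mu> * norm (a $ i) \<le> norm (?Pa $ i) + norm \<mu> * norm (?Qa $ i)"
    by (metis norm_mult norm_triangle_ineq)
  also have "\<dots> \<le> ?p + norm \<mu> * ?q"
    using P Q a i by (intro add_mono mult_left_mono norm_of_real_mult_mat_vec_le) auto
  also have "\<dots> \<le> norm \<mu> * norm \<mu> * ?p + norm \<mu> * norm \<mu> * ?q"
  proof (rule add_mono)
    have "0 \<le> ?p" using P a i by (intro nonneg_mult_mat_vec_nonneg[of _ n n]) auto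
    moreover have "0 \<le> ?q" using Q a i by (intro nonneg_mult_mat_vec_nonneg[of _ n n]) auto
    moreover have "1 \<le> norm \<mu> * norm \<mu>" "norm \<mu> \<le> norm \<mu> * norm \<mu>"
      using mult_mono[OF \<mu> \<mu>] mult_left_mono[OF \<mu>] by simp_all
    ultimately show "?p \<le> norm \<mu> * norm \<mu> * ?p" "norm \<mu> * ?q \<le> norm \<mu> * norm \<mu> * ?q"
      using mult_right_mono by fastforce+
  qed
  also have "\<dots> = norm \<mu> * norm \<mu> * ((P + Q) *\<^sub>v map_vec norm a) $ i"
    using P Q a i by (simp add: add_mult_distrib_mat_vec[of _ n n] distrib_left)
  finally have "norm \<mu> * norm \<mu> * norm (a $ i)
    \<le> norm \<mu> * norm \<mu> * ((P + Q) *\<^sub>v map_vec norm a) $ i" .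
  moreover have "0 < norm \<mu> * norm \<mu>" using \<mu> by (intro mult_pos_pos) linarith+
  ultimately show ?thesis by (simp add: mult_le_cancel_left_pos)
qed

lemma rho_companion_less_one:
  assumes P: "P \<in> carrier_mat n n" "nonneg_mat P" and Q: "Q \<in> carrier_mat n n" "nonneg_mat Q"
    and rho_PQ: "rho (P + Q) < 1"
  shows "rho (four_block_mat (0\<^sub>m n n) (1\<^sub>m n) P Q) < 1"
proof (cases "n = 0")
  case True
  then have "four_block_mat (0\<^sub>m n n) (1\<^sub>m n) P Q = P + Q" using P Q by (intro eq_matI) auto
  then show ?thesis using rho_PQ by simp
next
  case False
  have PQ: "P + Q \<in> carrier_mat n n" "nonneg_mat (P + Q)"
    using P Q by (auto simp: nonneg_mat_def)
  obtain k where k: "\<forall>i<n. row_sums ((P + Q) ^\<^sub>m k) $ i < 1"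
    using rho_less_one_imp_pow_row_sums_less_one[OF PQ(1) rho_PQ] by blast
  define Pc where "Pc = map_mat complex_of_real P"
  define Qc where "Qc = map_mat complex_of_real Q"
  have Pc: "Pc \<in> carrier_mat n n" and Qc: "Qc \<in> carrier_mat n n"
    using P Q by (simp_all add: Pc_def Qc_def)
  have companion: "four_block_mat (0\<^sub>m n n) (1\<^sub>m n) Pc Qc \<in> carrier_mat (n + n) (n + n)"
    using Pc Qc by simp
  have "map_mat complex_of_real (0\<^sub>m n n) = 0\<^sub>m n n" by (intro eq_matI) auto
  then have rho_eq: "rho (four_block_mat (0\<^sub>m n n) (1\<^sub>m n) P Q)
      = spectral_radius (four_block_mat (0\<^sub>m n n) (1\<^sub>m n) Pc Qc)"
    unfolding rho_def map_four_block_mat[OF zero_carrier_mat one_carrier_mat P(1) Q(1)]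
    by (simp add: Pc_def Qc_def of_real_hom.mat_hom_one)
  show ?thesis
  proof (rule ccontr)
    assume "\<not> ?thesis"
    obtain v \<mu> where ev: "eigenvector (four_block_mat (0\<^sub>m n n) (1\<^sub>m n) Pc Qc) v \<mu>"
      and "norm \<mu> = spectral_radius (four_block_mat (0\<^sub>m n n) (1\<^sub>m n) Pc Qc)"
      using spectral_radius_eigenvector[OF companion] False by auto
    with \<open>\<not> ?thesis\<close> have \<mu>: "1 \<le> norm \<mu>" by (simp add: rho_eq)
    note a = companion_eigenvector_first_block[OF Pc Qc ev]
    have "map_vec norm (vec_first v n) = 0\<^sub>v n"
      using quadratic_eigenproblem_abs_subinvariant[OF P Q _ \<mu> a(2)[unfolded Pc_def Qc_def]]
      by (intro nonneg_subinvariant_vec_eq_0[OF PQ k]) auto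
    with a(1) show False by (auto simp: vec_eq_iff)
  qed
qed

lemma rho_diag_mult_convex_combination_less_one:
  assumes lam: "\<forall>i<n. 0 \<le> lam i \<and> lam i \<le> 1"
    and W_stoch: "row_stochastic n W" and Wt_stoch: "row_stochastic n Wt"
    and beta: "\<forall>i<n. 0 < beta i \<and> beta i < 1"
    and hyp: "rho (mat_diag n lam * W) < 1 \<or> rho (mat_diag n lam * Wt) < 1"
  shows "rho (mat_diag n lam * ((1\<^sub>m n - mat_diag n beta) * W + mat_diag n beta * Wt)) < 1"
    (is "rho ?M < 1")
proof -
  note W = row_stochasticD[OF W_stoch] and Wt = row_stochasticD[OF Wt_stoch]
  define S where "S = mat_diag n lam * W"
  define T where "T = mat_diag n lam * Wt"
  have S: "S \<in> carrier_mat n n" "nonneg_mat S" and T: "T \<in> carrier_mat n n" "nonneg_mat T"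
    using W Wt lam by (auto simp: S_def T_def intro!: nonneg_mat_diag_mult)
  have rows: "row_sums S = vec n lam" "row_sums T = vec n lam"
    using W Wt by (simp_all add: S_def T_def row_sums_mat_diag_mult vec_eq_iff)
  have M: "?M \<in> carrier_mat n n" using W Wt by (simp add: one_minus_mat_diag)
  have M_entries: "?M $$ (i, j) = (1 - beta i) * S $$ (i, j) + beta i * T $$ (i, j)"
    if ij: "i < n" "j < n" for i j
  proof -
    have W2: "mat_diag n beta * Wt \<in> carrier_mat n n" using Wt by simp
    have "?M $$ (i, j)
        = lam i * (mat_diag n (\<lambda>i. 1 - beta i) * W + mat_diag n beta * Wt) $$ (i, j)"
      unfolding one_minus_mat_diag using add_carrier_mat[OF W2] ij by (rule mat_diag_mult_index)
    also have "\<dots> = lam i * ((1 - beta i) * W $$ (i, j) + beta i * Wt $$ (i, j))"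
      using W Wt carrier_matD[OF W2] ij
      by (simp add: mat_diag_mult_index[of _ n n] del: index_mult_mat)
    finally show ?thesis
      using W Wt ij
      by (simp add: S_def T_def mat_diag_mult_index[of _ n n] algebra_simps del: index_mult_mat)
  qed
  have rows_le: "\<forall>i<n. row_sums S $ i \<le> 1" "\<forall>i<n. row_sums T $ i \<le> 1"
    using rows lam by simp_all
  from hyp have "rho S < 1 \<or> rho T < 1" by (simp add: S_def T_def)
  then show ?thesis
  proof
    assume "rho S < 1"
    with beta M_entries show ?thesis
      by (intro rho_row_convex_combination_less_one[where a = beta, OF S T rows_le(1) _ _ M])
        (simp_all add: rows less_imp_le)
  next
    assume "rho T < 1"
    with beta M_entries show ?thesis
      by (intro rho_row_convex_combination_less_one[where a = "\<lambda>i. 1 - beta i",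
            OF T S rows_le(2) _ _ M])
        (simp_all add: rows algebra_simps less_imp_le)
  qed
qed

theorem corollary1:
  fixes n :: nat and lam beta :: "nat \<Rightarrow> real" and W Wt :: "real mat"
  assumes lam_range: "\<forall>i<n. 0 \<le> lam i \<and> lam i \<le> 1"
    and W_stoch: "row_stochastic n W"
    and Wt_stoch: "row_stochastic n Wt"
    and beta_range: "\<forall>i<n. 0 < beta i \<and> beta i < 1"
    and hyp: "rho (mat_diag n lam * W) < 1 \<or> rho (mat_diag n lam * Wt) < 1"
  shows "rho (fjmm_matrix n (mat_diag n lam)
                ((1\<^sub>m n - mat_diag n beta) * W) (mat_diag n beta * Wt)) < 1
       \<and> rho (mat_diag n lam * ((1\<^sub>m n - mat_diag n beta) * W + mat_diag n beta * Wt)) < 1"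
proof
  let ?L = "mat_diag n lam"
  let ?W1 = "(1\<^sub>m n - mat_diag n beta) * W" and ?W2 = "mat_diag n beta * Wt"
  note W = row_stochasticD[OF W_stoch] and Wt = row_stochasticD[OF Wt_stoch]
  show rho_sum: "rho (?L * (?W1 + ?W2)) < 1"
    by (rule rho_diag_mult_convex_combination_less_one[OF lam_range W_stoch Wt_stoch beta_range hyp])
  have W1: "?W1 \<in> carrier_mat n n" "nonneg_mat ?W1"
    using W beta_range unfolding one_minus_mat_diag
    by (auto intro!: nonneg_mat_diag_mult simp: less_imp_le)
  have W2: "?W2 \<in> carrier_mat n n" "nonneg_mat ?W2"
    using Wt beta_range
    by (auto intro!: nonneg_mat_diag_mult simp: less_imp_le)
  have "?L * (?W1 + ?W2) = ?L * ?W2 + ?L * ?W1"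
    using W1 W2 by (simp add: mult_add_distrib_mat[of _ n n] comm_add_mat[of _ n n])
  then show "rho (fjmm_matrix n ?L ?W1 ?W2) < 1"
    unfolding fjmm_matrix_def using W1 W2 lam_range rho_sum
    by (intro rho_companion_less_one) (auto intro!: nonneg_mat_diag_mult)
qed


end
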